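(* Let $f:M\to\mathbb R^n$ be a connected non-degenerate centro-affine hypersurface immersion with parallel cubic form, $y\in\mathcal D=M\times\mathbb R_{++}$, $J$ the Jordan algebra on $T_y\mathcal D$ and $\gamma$ the bilinear form $F''$ at $y$ (see context). If $\gamma$ is negative definite (i.e. $f$ is locally strongly convex of hyperbolic type), then $J$ is formally real.
   Context: Centro-affine hypersurface immersion: $f(\xi)$ transversal to $f_*T_\xi M$; with transversal field $-f$, $D_Xf_*Y=f_*\nabla_XY+h(X,Y)(-f)$ defines $\nabla$ and metric $h$; non-degenerate: $h$ non-degenerate; parallel cubic form: $\hat\nabla(\nabla h)=0$, $\hat\nabla$ Levi-Civita of $h$. With $F(\xi,\lambda)=\log\lambda$ on $\mathcal D$ and affine coordinates pulled back via $(\xi,\lambda)\mapsto\lambda f(\xi)$, $J$ is $T_y\mathcal D$ with product $(u\bullet v)^\gamma=-\frac12F_{,\alpha\beta\delta}F^{,\gamma\delta}u^\alpha v^\beta$. A real Jordan algebra is formally real if $\sum_k x_k^2=0$ implies all $x_k=0$. *)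

theory Defs
  imports "HOL-Analysis.Analysis"
begin

definition pd :: "(real^'i \<Rightarrow> 'b::real_normed_vector) \<Rightarrow> real^'i \<Rightarrow> 'i \<Rightarrow> 'b" where
  "pd g x i = frechet_derivative g (at x) (axis i 1)"

fun ipd :: "(real^'i \<Rightarrow> 'b::real_normed_vector) \<Rightarrow> 'i list \<Rightarrow> real^'i \<Rightarrow> 'b" where
  "ipd g [] = g"
| "ipd g (i # is) = (\<lambda>x. pd (ipd g is) x i)"

definition smooth_on :: "(real^'i) set \<Rightarrow> (real^'i \<Rightarrow> 'b::real_normed_vector) \<Rightarrow> bool" where
  "smooth_on U g \<longleftrightarrow> (\<forall>is. \<forall>x\<in>U. ipd g is differentiable (at x))"

definition centroaffine_immersion :: "(real^'m) set \<Rightarrow> (real^'m \<Rightarrow> real^'n) \<Rightarrow> bool" where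
  "centroaffine_immersion U f \<longleftrightarrow>
     open U \<and> smooth_on U f \<and>
     (\<forall>\<xi>\<in>U. inj (frechet_derivative f (at \<xi>)) \<and>
             f \<xi> \<notin> range (frechet_derivative f (at \<xi>)))"

text \<open>Structure equation with transversal field -f, in coordinates:
  D_{e_i} f_* e_j = f_* (nabla_{e_i} e_j) + h(e_i,e_j) (-f),
  where nabla_{e_i} e_j = sum_k Gam xi i j k e_k.\<close>
definition structure_eq ::
  "(real^'m) set \<Rightarrow> (real^'m \<Rightarrow> real^'n) \<Rightarrow> (real^'m \<Rightarrow> 'm \<Rightarrow> 'm \<Rightarrow> 'm \<Rightarrow> real)
     \<Rightarrow> (real^'m \<Rightarrow> 'm \<Rightarrow> 'm \<Rightarrow> real) \<Rightarrow> bool" where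
  "structure_eq U f Gam h \<longleftrightarrow>
     (\<forall>\<xi>\<in>U. \<forall>i j. ipd f [i, j] \<xi> =
        (\<Sum>k\<in>UNIV. Gam \<xi> i j k *\<^sub>R pd f \<xi> k) - h \<xi> i j *\<^sub>R f \<xi>)"

definition hmat :: "(real^'m \<Rightarrow> 'm \<Rightarrow> 'm \<Rightarrow> real) \<Rightarrow> real^'m \<Rightarrow> real^'m^'m" where
  "hmat h \<xi> = (\<chi> i j. h \<xi> i j)"

definition nondegenerate_metric :: "(real^'m) set \<Rightarrow> (real^'m \<Rightarrow> 'm \<Rightarrow> 'm \<Rightarrow> real) \<Rightarrow> bool" where
  "nondegenerate_metric U h \<longleftrightarrow> (\<forall>\<xi>\<in>U. invertible (hmat h \<xi>))"

text \<open>Cubic form C = nabla h: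
  C_{ijk} = d_i h_{jk} - h(nabla_{e_i} e_j, e_k) - h(e_j, nabla_{e_i} e_k).\<close>
definition cubic_form ::
  "(real^'m \<Rightarrow> 'm \<Rightarrow> 'm \<Rightarrow> 'm \<Rightarrow> real) \<Rightarrow> (real^'m \<Rightarrow> 'm \<Rightarrow> 'm \<Rightarrow> real)
     \<Rightarrow> real^'m \<Rightarrow> 'm \<Rightarrow> 'm \<Rightarrow> 'm \<Rightarrow> real" where
  "cubic_form Gam h \<xi> i j k =
     pd (\<lambda>z. h z j k) \<xi> i
     - (\<Sum>l\<in>UNIV. Gam \<xi> i j l * h \<xi> l k)
     - (\<Sum>l\<in>UNIV. Gam \<xi> i k l * h \<xi> j l)"

definition levi_civita ::
  "(real^'m \<Rightarrow> 'm \<Rightarrow> 'm \<Rightarrow> real) \<Rightarrow> real^'m \<Rightarrow> 'm \<Rightarrow> 'm \<Rightarrow> 'm \<Rightarrow> real" where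
  "levi_civita h \<xi> i j l =
     (1/2) * (\<Sum>k\<in>UNIV. matrix_inv (hmat h \<xi>) $ l $ k *
        (pd (\<lambda>z. h z j k) \<xi> i + pd (\<lambda>z. h z i k) \<xi> j - pd (\<lambda>z. h z i j) \<xi> k))"

definition parallel_cubic_form ::
  "(real^'m) set \<Rightarrow> (real^'m \<Rightarrow> 'm \<Rightarrow> 'm \<Rightarrow> 'm \<Rightarrow> real) \<Rightarrow> (real^'m \<Rightarrow> 'm \<Rightarrow> 'm \<Rightarrow> real) \<Rightarrow> bool" where
  "parallel_cubic_form U Gam h \<longleftrightarrow>
     (\<forall>\<xi>\<in>U. \<forall>p i j k.
        pd (\<lambda>z. cubic_form Gam h z i j k) \<xi> p
        - (\<Sum>l\<in>UNIV. levi_civita h \<xi> p i l * cubic_form Gam h \<xi> l j k)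
        - (\<Sum>l\<in>UNIV. levi_civita h \<xi> p j l * cubic_form Gam h \<xi> i l k)
        - (\<Sum>l\<in>UNIV. levi_civita h \<xi> p k l * cubic_form Gam h \<xi> i j l) = 0)"

text \<open>Hessian F_{,ab} and third derivatives F_{,abd} of the potential G (F in affine coordinates).\<close>
definition F2 :: "(real^'n \<Rightarrow> real) \<Rightarrow> real^'n \<Rightarrow> 'n \<Rightarrow> 'n \<Rightarrow> real" where
  "F2 G x a b = ipd G [b, a] x"

definition F3 :: "(real^'n \<Rightarrow> real) \<Rightarrow> real^'n \<Rightarrow> 'n \<Rightarrow> 'n \<Rightarrow> 'n \<Rightarrow> real" where
  "F3 G x a b d = ipd G [d, b, a] x"

definition gamma_form :: "(real^'n \<Rightarrow> real) \<Rightarrow> real^'n \<Rightarrow> real^'n \<Rightarrow> real^'n \<Rightarrow> real" where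
  "gamma_form G x u v = (\<Sum>a\<in>UNIV. \<Sum>b\<in>UNIV. F2 G x a b * u $ a * v $ b)"

definition jprod :: "(real^'n \<Rightarrow> real) \<Rightarrow> real^'n \<Rightarrow> real^'n \<Rightarrow> real^'n \<Rightarrow> real^'n" where
  "jprod G x u v = (\<chi> c. - (1/2) * (\<Sum>a\<in>UNIV. \<Sum>b\<in>UNIV. \<Sum>d\<in>UNIV.
       F3 G x a b d * matrix_inv (\<chi> p q. F2 G x p q) $ c $ d * u $ a * v $ b))"

definition formally_real :: "('a \<Rightarrow> 'a \<Rightarrow> 'a::comm_monoid_add) \<Rightarrow> bool" where
  "formally_real prodop \<longleftrightarrow>
     (\<forall>xs. sum_list (map (\<lambda>x. prodop x x) xs) = 0 \<longrightarrow> (\<forall>x\<in>set xs. x = 0))"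

definition negative_definite :: "('a::zero \<Rightarrow> 'a \<Rightarrow> real) \<Rightarrow> bool" where
  "negative_definite B \<longleftrightarrow> (\<forall>u. u \<noteq> 0 \<longrightarrow> B u u < 0)"

end

theory Submission
  imports Defs
begin

text \<open>
  Since \<open>F\<close> is the potential \<open>log \<lambda>\<close> pulled back along the cone map \<open>(\<xi>, \<lambda>) \<mapsto> \<lambda> f(\<xi>)\<close>,
  it is logarithmically homogeneous near \<open>y\<close>: \<open>F(t z) = F(z) + log t\<close>. Differentiating this twice
  in \<open>z\<close> and once in \<open>t\<close> gives the Euler identity \<open>F_{,\<alpha>\<beta>\<delta>} y^\<delta> = -2 F_{,\<alpha>\<beta>}\<close>, which says
  exactly that \<open>\<gamma>(y, u \<bullet> u) = \<gamma>(u, u)\<close>. Hence \<open>\<Sum> u_k \<bullet> u_k = 0\<close> forces \<open>\<Sum> \<gamma>(u_k, u_k) = 0\<close>,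
  and negative definiteness of \<open>\<gamma>\<close> makes every \<open>u_k\<close> vanish.
  The analytic work is to see that \<open>F\<close> is smooth near \<open>y\<close>: by transversality of \<open>f\<close> the cone
  map is a local diffeomorphism, so \<open>F\<close> is \<open>log \<lambda>\<close> composed with its smooth local inverse.
\<close>

section \<open>Locality of partial derivatives\<close>

lemma frechet_derivative_cong_open:
  assumes "open S" "x \<in> S" "\<And>z. z \<in> S \<Longrightarrow> g z = g' z"
  shows "frechet_derivative g (at x) = frechet_derivative g' (at x)"
proof -
  have "(g has_derivative D) (at x) \<longleftrightarrow> (g' has_derivative D) (at x)" for D
    using has_derivative_transform_within_open[OF _ assms(1,2), of g D UNIV g']
      has_derivative_transform_within_open[OF _ assms(1,2), of g' D UNIV g] assms(3)
    by auto
  then show ?thesis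
    unfolding frechet_derivative_def by simp
qed

lemma pd_cong_open:
  assumes "open S" "x \<in> S" "\<And>z. z \<in> S \<Longrightarrow> g z = g' z"
  shows "pd g x i = pd g' x i"
  unfolding pd_def using frechet_derivative_cong_open[OF assms] by simp

lemma differentiable_at_cong_open:
  assumes "open S" "x \<in> S" "\<And>z. z \<in> S \<Longrightarrow> g z = g' z" "g' differentiable at x"
  shows "g differentiable at x"
  using assms has_derivative_transform_within_open[of g' _ x UNIV S g]
  unfolding differentiable_def by metis

lemma ipd_cong_open:
  assumes "open U" "\<And>z. z \<in> U \<Longrightarrow> g z = g' z" "x \<in> U"
  shows "ipd g is x = ipd g' is x"
  using assms(3)
proof (induction "is" arbitrary: x)
  case Nil
  then show ?case using assms(2) by simp
next
  case (Cons i "is")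
  have "pd (ipd g is) x i = pd (ipd g' is) x i"
    using pd_cong_open[OF assms(1) Cons.prems] Cons.IH by blast
  then show ?case by simp
qed

lemma pd_eq_derivative:
  assumes "(g has_derivative g') (at x)"
  shows "pd g x i = g' (axis i 1)"
  unfolding pd_def using frechet_derivative_at[OF assms] by simp

lemma frechet_derivative_eq_sum_pd:
  fixes g :: "real^'i \<Rightarrow> 'b::real_normed_vector"
  assumes "g differentiable at x"
  shows "frechet_derivative g (at x) v = (\<Sum>k\<in>UNIV. v $ k *\<^sub>R pd g x k)"
proof -
  have "frechet_derivative g (at x) v = frechet_derivative g (at x) (\<Sum>k\<in>UNIV. v $ k *\<^sub>R axis k 1)"
    by (metis (no_types) basis_expansion scalar_mult_eq_scaleR)
  also have "\<dots> = (\<Sum>k\<in>UNIV. v $ k *\<^sub>R frechet_derivative g (at x) (axis k 1))"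
    using linear_frechet_derivative[OF assms] by (simp add: linear_sum linear_scale)
  finally show ?thesis by (simp add: pd_def)
qed

lemma pd_compose:
  fixes h :: "real^'n \<Rightarrow> 'b::real_normed_vector"
  assumes "(\<phi> has_derivative \<phi>') (at x)" "h differentiable at (\<phi> x)"
  shows "pd (\<lambda>w. h (\<phi> w)) x j = (\<Sum>k\<in>UNIV. \<phi>' (axis j 1) $ k *\<^sub>R pd h (\<phi> x) k)"
proof -
  have "((\<lambda>w. h (\<phi> w)) has_derivative (\<lambda>v. frechet_derivative h (at (\<phi> x)) (\<phi>' v))) (at x)"
    using has_derivative_compose[OF assms(1) frechet_derivative_works[THEN iffD1, OF assms(2)]] .
  then show ?thesis
    by (simp add: pd_eq_derivative frechet_derivative_eq_sum_pd[OF assms(2)])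
qed

section \<open>Closure properties of smooth functions\<close>

lemma smooth_onI_closed:
  fixes h :: "real^'i \<Rightarrow> 'b::real_normed_vector"
  assumes U: "open U" and "P h"
    and diff: "\<And>g x. P g \<Longrightarrow> x \<in> U \<Longrightarrow> g differentiable at x"
    and pd_closed: "\<And>g j. P g \<Longrightarrow> \<exists>g'. P g' \<and> (\<forall>x\<in>U. pd g x j = g' x)"
  shows "smooth_on U h"
proof -
  have "\<exists>g'. P g' \<and> (\<forall>x\<in>U. ipd g is x = g' x)" if "P g" for g "is"
    using that
  proof (induction "is" arbitrary: g)
    case Nil
    then show ?case by auto
  next
    case (Cons i "is")
    then obtain g' where g': "P g'" "\<forall>x\<in>U. ipd g is x = g' x" by blast
    obtain g'' where g'': "P g''" "\<forall>x\<in>U. pd g' x i = g'' x" using pd_closed[OF g'(1)] by blast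
    have "\<forall>x\<in>U. ipd g (i # is) x = g'' x"
      using pd_cong_open[OF U, of _ "ipd g is" g' i] g' g'' by simp
    then show ?case using g'' by blast
  qed
  then show ?thesis
    unfolding smooth_on_def using differentiable_at_cong_open[OF U] diff \<open>P h\<close> by metis
qed

lemma smooth_on_imp_differentiable: "smooth_on U g \<Longrightarrow> x \<in> U \<Longrightarrow> g differentiable at x"
  unfolding smooth_on_def by (metis ipd.simps(1))

lemma smooth_on_imp_continuous_on: "smooth_on U g \<Longrightarrow> continuous_on U g"
  using continuous_at_imp_continuous_on differentiable_imp_continuous_within
    smooth_on_imp_differentiable by blast

lemma smooth_on_subset: "smooth_on U g \<Longrightarrow> U' \<subseteq> U \<Longrightarrow> smooth_on U' g"
  unfolding smooth_on_def by blast

lemma smooth_on_cong: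
  assumes "open U" "smooth_on U g" "\<And>z. z \<in> U \<Longrightarrow> g z = g' z"
  shows "smooth_on U g'"
  unfolding smooth_on_def
proof (intro allI ballI)
  fix "is" x assume x: "x \<in> U"
  have "\<forall>z\<in>U. ipd g' is z = ipd g is z"
    using ipd_cong_open[OF assms(1), of g' g] assms(3) by auto
  then show "ipd g' is differentiable at x"
    using differentiable_at_cong_open[OF assms(1) x, of "ipd g' is" "ipd g is"] assms(2) x
    unfolding smooth_on_def by auto
qed

lemma ipd_snoc: "ipd g (is @ [j]) = ipd (\<lambda>x. pd g x j) is"
  by (induction "is") auto

lemma smooth_on_pd: "smooth_on U h \<Longrightarrow> smooth_on U (\<lambda>x. pd h x j)"
  unfolding smooth_on_def by (metis ipd_snoc)

lemma smooth_onI_pd: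
  fixes h :: "real^'i \<Rightarrow> 'b::real_normed_vector"
  assumes U: "open U" and h: "\<And>x. x \<in> U \<Longrightarrow> h differentiable at x"
    and pd_h: "\<And>j. smooth_on U (\<lambda>x. pd h x j)"
  shows "smooth_on U h"
proof (rule smooth_onI_closed[OF U, where P = "\<lambda>g. g = h \<or> smooth_on U g"])
  fix g x assume "g = h \<or> smooth_on U g" "x \<in> U"
  then show "g differentiable at x" using h smooth_on_imp_differentiable by blast
next
  fix g j assume "g = h \<or> smooth_on U g"
  then have "smooth_on U (\<lambda>x. pd g x j)" using pd_h smooth_on_pd by blast
  then show "\<exists>g'. (g' = h \<or> smooth_on U g') \<and> (\<forall>x\<in>U. pd g x j = g' x)" by blast
qed simp

lemma smooth_on_const: "smooth_on U (\<lambda>x. c)"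
proof -
  have ipd_const: "ipd (\<lambda>x. c) (i # is) = (\<lambda>x. 0)" for i "is"
    by (induction "is" arbitrary: i) (auto simp: pd_def)
  have "ipd (\<lambda>x. c) is differentiable at x" for "is" x
  proof (cases "is")
    case (Cons i l)
    then show ?thesis by (simp only: ipd_const differentiable_const)
  qed simp
  then show ?thesis
    unfolding smooth_on_def by blast
qed

lemma smooth_on_coord: "smooth_on U (\<lambda>x::real^'i. x $ k)"
proof -
  have coord_deriv: "((\<lambda>x::real^'i. x $ k) has_derivative (\<lambda>v. v $ k)) (at x)" for x
    by (rule bounded_linear_imp_has_derivative[OF bounded_linear_vec_nth])
  have pd_coord: "(\<lambda>x. pd (\<lambda>x::real^'i. x $ k) x j) = (\<lambda>x. axis j 1 $ k)" for j
    using pd_eq_derivative[OF coord_deriv] by simp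
  have "smooth_on UNIV (\<lambda>x::real^'i. x $ k)"
  proof (rule smooth_onI_pd[OF open_UNIV])
    show "(\<lambda>x::real^'i. x $ k) differentiable at x" for x
      by (rule differentiableI[OF coord_deriv])
    show "smooth_on UNIV (\<lambda>x. pd (\<lambda>x::real^'i. x $ k) x j)" for j
      unfolding pd_coord by (rule smooth_on_const)
  qed
  then show ?thesis using smooth_on_subset by blast
qed

lemma has_derivative_component_frechet:
  fixes g :: "real^'i \<Rightarrow> real^'k"
  assumes "g differentiable at x"
  shows "((\<lambda>x. g x $ k) has_derivative (\<lambda>v. frechet_derivative g (at x) v $ k)) (at x)"
  using bounded_linear.has_derivative[OF bounded_linear_vec_nth]
    assms[unfolded frechet_derivative_works] .

lemma smooth_on_component:
  fixes g :: "real^'i \<Rightarrow> real^'k"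
  assumes U: "open U" and g: "smooth_on U g"
  shows "smooth_on U (\<lambda>x. g x $ k)"
proof (rule smooth_onI_closed[OF U, where P = "\<lambda>h. \<exists>g. smooth_on U g \<and> (\<forall>x\<in>U. h x = g x $ k)"])
  fix h :: "real^'i \<Rightarrow> real" and x assume "\<exists>g. smooth_on U g \<and> (\<forall>x\<in>U. h x = g x $ k)" and x: "x \<in> U"
  then obtain g :: "real^'i \<Rightarrow> real^'k" where g: "smooth_on U g" "\<forall>x\<in>U. h x = g x $ k"
    by blast
  have gk: "(\<lambda>x. g x $ k) differentiable at x"
    by (rule differentiableI[OF has_derivative_component_frechet[OF smooth_on_imp_differentiable[OF g(1) x]]])
  show "h differentiable at x"
    by (rule differentiable_at_cong_open[OF U x _ gk]) (use g(2) in simp)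
next
  fix h :: "real^'i \<Rightarrow> real" and j assume "\<exists>g. smooth_on U g \<and> (\<forall>x\<in>U. h x = g x $ k)"
  then obtain g :: "real^'i \<Rightarrow> real^'k" where g: "smooth_on U g" "\<forall>x\<in>U. h x = g x $ k"
    by blast
  have "pd h x j = pd g x j $ k" if x: "x \<in> U" for x
  proof -
    have "pd h x j = pd (\<lambda>x. g x $ k) x j"
      by (rule pd_cong_open[OF U x]) (use g in auto)
    also have "\<dots> = frechet_derivative g (at x) (axis j 1) $ k"
      by (rule pd_eq_derivative[OF has_derivative_component_frechet[OF smooth_on_imp_differentiable[OF g(1) x]]])
    also have "\<dots> = pd g x j $ k"
      by (simp add: pd_def)
    finally show ?thesis .
  qed
  moreover have "smooth_on U (\<lambda>x. pd g x j)"
    by (rule smooth_on_pd[OF g(1)])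
  ultimately show "\<exists>h'. (\<exists>g. smooth_on U g \<and> (\<forall>x\<in>U. h' x = g x $ k)) \<and> (\<forall>x\<in>U. pd h x j = h' x)"
    by (intro exI[of _ "\<lambda>x. pd g x j $ k"] conjI exI[of _ "\<lambda>x. pd g x j"]) auto
next
  show "\<exists>g'. smooth_on U g' \<and> (\<forall>x\<in>U. g x $ k = g' x $ k)"
    using g by blast
qed

definition sum_products :: "((real^'i \<Rightarrow> real) \<times> (real^'i \<Rightarrow> real)) list \<Rightarrow> real^'i \<Rightarrow> real" where
  "sum_products ps x = sum_list (map (\<lambda>(A, B). A x * B x) ps)"

lemma has_derivative_sum_products:
  assumes "\<forall>(A, B)\<in>set ps. A differentiable at x \<and> B differentiable at x"
  shows "(sum_products ps has_derivative (\<lambda>v. sum_list (map (\<lambda>(A, B).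
      frechet_derivative A (at x) v * B x + A x * frechet_derivative B (at x) v) ps))) (at x)"
  using assms
proof (induction ps)
  case Nil
  then show ?case by (simp add: sum_products_def)
next
  case (Cons p ps)
  obtain A B where p: "p = (A, B)" by force
  have "(A has_derivative frechet_derivative A (at x)) (at x)"
    and "(B has_derivative frechet_derivative B (at x)) (at x)"
    using Cons.prems p frechet_derivative_works by auto
  then have "((\<lambda>x. A x * B x + sum_products ps x) has_derivative
     (\<lambda>v. (frechet_derivative A (at x) v * B x + A x * frechet_derivative B (at x) v) +
        sum_list (map (\<lambda>(A, B). frechet_derivative A (at x) v * B x + A x * frechet_derivative B (at x) v) ps))) (at x)"
    using Cons.IH Cons.prems by (auto intro!: derivative_eq_intros simp: algebra_simps)
  moreover have "sum_products (p # ps) = (\<lambda>x. A x * B x + sum_products ps x)"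
    by (auto simp: sum_products_def p)
  ultimately show ?case by (simp add: p)
qed

lemma smooth_on_sum_products:
  fixes U :: "(real^'i) set"
  assumes U: "open U" and ps: "\<forall>(A, B)\<in>set ps. smooth_on U A \<and> smooth_on U B"
  shows "smooth_on U (sum_products ps)"
proof (rule smooth_onI_closed[OF U, where P = "\<lambda>h. \<exists>ps. (\<forall>(A, B)\<in>set ps. smooth_on U A \<and> smooth_on U B)
                                                     \<and> (\<forall>x\<in>U. h x = sum_products ps x)"])
  have deriv: "(sum_products ps has_derivative (\<lambda>v. sum_list (map (\<lambda>(A, B).
      frechet_derivative A (at x) v * B x + A x * frechet_derivative B (at x) v) ps))) (at x)"
    if "\<forall>(A, B)\<in>set ps. smooth_on U A \<and> smooth_on U B" "x \<in> U" for ps x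
    by (rule has_derivative_sum_products) (use that smooth_on_imp_differentiable in fast)
  {
    fix h :: "real^'i \<Rightarrow> real" and x
    assume "\<exists>ps. (\<forall>(A, B)\<in>set ps. smooth_on U A \<and> smooth_on U B) \<and> (\<forall>x\<in>U. h x = sum_products ps x)"
      and x: "x \<in> U"
    then obtain ps where ps: "\<forall>(A, B)\<in>set ps. smooth_on U A \<and> smooth_on U B"
      "\<forall>x\<in>U. h x = sum_products ps x" by blast
    have ps_diff: "sum_products ps differentiable at x"
      by (rule differentiableI[OF deriv[OF ps(1) x]])
    show "h differentiable at x"
      by (rule differentiable_at_cong_open[OF U x _ ps_diff]) (use ps(2) in simp)
  next
    fix h :: "real^'i \<Rightarrow> real" and j
    assume "\<exists>ps. (\<forall>(A, B)\<in>set ps. smooth_on U A \<and> smooth_on U B) \<and> (\<forall>x\<in>U. h x = sum_products ps x)"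
    then obtain ps where ps: "\<forall>(A, B)\<in>set ps. smooth_on U A \<and> smooth_on U B"
      "\<forall>x\<in>U. h x = sum_products ps x" by blast
    define ps' where "ps' = concat (map (\<lambda>(A, B). [(\<lambda>x. pd A x j, B), (A, \<lambda>x. pd B x j)]) ps)"
    have ps': "\<forall>(A, B)\<in>set ps'. smooth_on U A \<and> smooth_on U B"
      using ps(1) smooth_on_pd by (fastforce simp: ps'_def)
    have "pd h x j = sum_products ps' x" if x: "x \<in> U" for x
    proof -
      have "pd h x j = pd (sum_products ps) x j"
        by (rule pd_cong_open[OF U x]) (use ps(2) in simp)
      also have "\<dots> = sum_list (map (\<lambda>(A, B). pd A x j * B x + A x * pd B x j) ps)"
        using pd_eq_derivative[OF deriv[OF ps(1) x]] by (simp add: pd_def)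
      also have "\<dots> = sum_products ps' x"
        unfolding ps'_def by (induction ps) (auto simp: sum_products_def)
      finally show ?thesis .
    qed
    then show "\<exists>h'. (\<exists>ps. (\<forall>(A, B)\<in>set ps. smooth_on U A \<and> smooth_on U B) \<and> (\<forall>x\<in>U. h' x = sum_products ps x))
        \<and> (\<forall>x\<in>U. pd h x j = h' x)"
      using ps' by blast
  }
qed (use ps in blast)

lemma smooth_on_mult:
  fixes A B :: "real^'i \<Rightarrow> real"
  assumes "open U" "smooth_on U A" "smooth_on U B"
  shows "smooth_on U (\<lambda>x. A x * B x)"
proof -
  have "sum_products [(A, B)] = (\<lambda>x. A x * B x)"
    by (simp add: sum_products_def fun_eq_iff)
  then show ?thesis
    using smooth_on_sum_products[of U "[(A, B)]"] assms by simp
qed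

lemma smooth_on_add:
  fixes A B :: "real^'i \<Rightarrow> real"
  assumes "open U" "smooth_on U A" "smooth_on U B"
  shows "smooth_on U (\<lambda>x. A x + B x)"
proof -
  have "sum_products [(A, \<lambda>x. 1), (B, \<lambda>x. 1)] = (\<lambda>x. A x + B x)"
    by (simp add: sum_products_def fun_eq_iff)
  then show ?thesis
    using smooth_on_sum_products[of U "[(A, \<lambda>x. 1), (B, \<lambda>x. 1)]"] assms
      smooth_on_const[of U 1] by simp
qed

lemma smooth_on_sum:
  fixes A :: "'s \<Rightarrow> real^'i \<Rightarrow> real"
  assumes "open U" "finite S" "\<And>s. s \<in> S \<Longrightarrow> smooth_on U (A s)"
  shows "smooth_on U (\<lambda>x. \<Sum>s\<in>S. A s x)"
  using assms(2,3)
  by (induction S rule: finite_induct) (simp_all add: smooth_on_const smooth_on_add[OF assms(1)])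

lemma smooth_on_prod:
  fixes A :: "'s \<Rightarrow> real^'i \<Rightarrow> real"
  assumes "open U" "finite S" "\<And>s. s \<in> S \<Longrightarrow> smooth_on U (A s)"
  shows "smooth_on U (\<lambda>x. \<Prod>s\<in>S. A s x)"
  using assms(2,3)
  by (induction S rule: finite_induct) (simp_all add: smooth_on_const smooth_on_mult[OF assms(1)])

lemma smooth_on_det:
  fixes M :: "real^'i \<Rightarrow> real^'k^'k"
  assumes "open U" "\<And>i j. smooth_on U (\<lambda>x. M x $ i $ j)"
  shows "smooth_on U (\<lambda>x. det (M x))"
  unfolding det_def
  by (intro smooth_on_sum smooth_on_mult smooth_on_prod assms smooth_on_const
      finite_permutations) simp_all

lemma smooth_on_inverse:
  fixes B :: "real^'i \<Rightarrow> real"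
  assumes U: "open U" and B: "smooth_on U B" and nz: "\<And>x. x \<in> U \<Longrightarrow> B x \<noteq> 0"
  shows "smooth_on U (\<lambda>x. 1 / B x)"
proof (rule smooth_onI_closed[OF U, where P = "\<lambda>h. \<exists>A n. smooth_on U A \<and> (\<forall>x\<in>U. h x = A x * (1 / B x) ^ n)"])
  have deriv: "((\<lambda>x. A x * (1 / B x) ^ n) has_derivative (\<lambda>v. (frechet_derivative A (at x) v * B x
      - real n * A x * frechet_derivative B (at x) v) * (1 / B x) ^ (n + 1))) (at x)"
    if A: "smooth_on U A" and x: "x \<in> U" for A n x
  proof -
    have "(A has_derivative frechet_derivative A (at x)) (at x)"
      and "(B has_derivative frechet_derivative B (at x)) (at x)"
      using A B x smooth_on_imp_differentiable frechet_derivative_works by blast+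
    then show ?thesis
      using nz[OF x]
      by (auto intro!: derivative_eq_intros ext) (cases n; simp add: divide_simps)
  qed
  {
    fix h :: "real^'i \<Rightarrow> real" and x
    assume "\<exists>A n. smooth_on U A \<and> (\<forall>x\<in>U. h x = A x * (1 / B x) ^ n)" and x: "x \<in> U"
    then obtain A n where A: "smooth_on U A" "\<forall>x\<in>U. h x = A x * (1 / B x) ^ n" by blast
    have Ax: "(\<lambda>x. A x * (1 / B x) ^ n) differentiable at x"
      by (rule differentiableI[OF deriv[OF A(1) x]])
    show "h differentiable at x"
      by (rule differentiable_at_cong_open[OF U x _ Ax]) (use A(2) in simp)
  next
    fix h :: "real^'i \<Rightarrow> real" and j
    assume "\<exists>A n. smooth_on U A \<and> (\<forall>x\<in>U. h x = A x * (1 / B x) ^ n)"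
    then obtain A n where A: "smooth_on U A" "\<forall>x\<in>U. h x = A x * (1 / B x) ^ n" by blast
    define A' where "A' x = pd A x j * B x + (- real n) * (A x * pd B x j)" for x
    have "smooth_on U A'"
      unfolding A'_def by (intro smooth_on_add smooth_on_mult U smooth_on_pd A(1) B smooth_on_const)
    moreover have "pd h x j = A' x * (1 / B x) ^ (n + 1)" if x: "x \<in> U" for x
    proof -
      have "pd h x j = pd (\<lambda>x. A x * (1 / B x) ^ n) x j"
        by (rule pd_cong_open[OF U x]) (use A(2) in simp)
      also have "\<dots> = A' x * (1 / B x) ^ (n + 1)"
        using pd_eq_derivative[OF deriv[OF A(1) x]] by (simp add: A'_def pd_def)
      finally show ?thesis .
    qed
    ultimately show "\<exists>h'. (\<exists>A n. smooth_on U A \<and> (\<forall>x\<in>U. h' x = A x * (1 / B x) ^ n))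
        \<and> (\<forall>x\<in>U. pd h x j = h' x)"
      by (intro exI[of _ "\<lambda>x. A' x * (1 / B x) ^ (n + 1)"] conjI exI[of _ A'] exI[of _ "n + 1"]) auto
  }
next
  show "\<exists>A n. smooth_on U A \<and> (\<forall>x\<in>U. 1 / B x = A x * (1 / B x) ^ n)"
    by (intro exI[of _ "\<lambda>x. 1"] exI[of _ 1] conjI smooth_on_const) simp
qed

lemma smooth_on_ln_coord:
  assumes U: "open U" and pos: "\<And>x. x \<in> U \<Longrightarrow> x $ c > 0"
  shows "smooth_on U (\<lambda>x::real^'i. ln (x $ c))"
proof (rule smooth_onI_pd[OF U])
  have deriv: "((\<lambda>x. ln (x $ c)) has_derivative (\<lambda>v. v $ c / x $ c)) (at x)"
    if "x \<in> U" for x :: "real^'i"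
    using pos[OF that] bounded_linear_imp_has_derivative[OF bounded_linear_vec_nth[of c], of "at x"]
    by (auto intro!: derivative_eq_intros simp: field_simps)
  show "(\<lambda>x::real^'i. ln (x $ c)) differentiable at x" if "x \<in> U" for x
    by (rule differentiableI[OF deriv[OF that]])
  fix j :: 'i
  have "smooth_on U (\<lambda>x::real^'i. axis j 1 $ c * (1 / x $ c))"
    using pos by (intro smooth_on_mult U smooth_on_const smooth_on_inverse smooth_on_coord) force
  then show "smooth_on U (\<lambda>x. pd (\<lambda>x::real^'i. ln (x $ c)) x j)"
    by (rule smooth_on_cong[OF U]) (simp add: pd_eq_derivative[OF deriv])
qed

lemma smooth_on_compose_linear:
  fixes L :: "real^'n \<Rightarrow> real^'m" and h :: "real^'m \<Rightarrow> real"
  assumes L: "linear L" and U: "open U" and h: "smooth_on U h"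
  shows "smooth_on (L -` U) (\<lambda>w. h (L w))"
proof -
  have L_bounded: "bounded_linear L"
    using L linear_conv_bounded_linear by blast
  have L_deriv: "(L has_derivative L) (at w)" for w
    using L_bounded bounded_linear_imp_has_derivative by blast
  have O: "open (L -` U)"
    using continuous_open_vimage[OF U] linear_continuous_at[OF L_bounded] by blast
  show ?thesis
  proof (rule smooth_onI_closed[OF O, where P = "\<lambda>g. \<exists>h'. smooth_on U h' \<and> (\<forall>w\<in>L -` U. g w = h' (L w))"])
    fix g :: "real^'n \<Rightarrow> real" and w
    assume "\<exists>h'. smooth_on U h' \<and> (\<forall>w\<in>L -` U. g w = h' (L w))" and w: "w \<in> L -` U"
    then obtain h' where h': "smooth_on U h'" "\<forall>w\<in>L -` U. g w = h' (L w)" by blast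
    have "(h' \<circ> L) differentiable at w"
      using differentiable_chain_at[OF differentiableI[OF L_deriv]]
        smooth_on_imp_differentiable[OF h'(1)] w by blast
    then have hL: "(\<lambda>w. h' (L w)) differentiable at w"
      by (simp add: o_def)
    show "g differentiable at w"
      by (rule differentiable_at_cong_open[OF O w _ hL]) (use h'(2) in simp)
  next
    fix g :: "real^'n \<Rightarrow> real" and j
    assume "\<exists>h'. smooth_on U h' \<and> (\<forall>w\<in>L -` U. g w = h' (L w))"
    then obtain h' where h': "smooth_on U h'" "\<forall>w\<in>L -` U. g w = h' (L w)" by blast
    define h'' where "h'' u = (\<Sum>k\<in>UNIV. L (axis j 1) $ k * pd h' u k)" for u
    have "smooth_on U h''"
      unfolding h''_def by (intro smooth_on_sum smooth_on_mult U smooth_on_const smooth_on_pd h'(1)) simp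
    moreover have "pd g w j = h'' (L w)" if w: "w \<in> L -` U" for w
    proof -
      have "pd g w j = pd (\<lambda>w. h' (L w)) w j"
        by (rule pd_cong_open[OF O w]) (use h'(2) in simp)
      also have "\<dots> = h'' (L w)"
        using pd_compose[OF L_deriv smooth_on_imp_differentiable[OF h'(1)]] w by (simp add: h''_def)
      finally show ?thesis .
    qed
    ultimately show "\<exists>g'. (\<exists>h'. smooth_on U h' \<and> (\<forall>w\<in>L -` U. g' w = h' (L w))) \<and> (\<forall>w\<in>L -` U. pd g w j = g' w)"
      by (intro exI[of _ "\<lambda>w. h'' (L w)"] conjI exI[of _ h'']) auto
  next
    show "\<exists>h'. smooth_on U h' \<and> (\<forall>w\<in>L -` U. h (L w) = h' (L w))"
      using h by blast
  qed
qed

section \<open>Smooth local inverses\<close>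

lemma smooth_on_compose_local_inverse:
  fixes \<Psi> g :: "real^'n \<Rightarrow> real^'n" and B :: "real^'n \<Rightarrow> real"
  assumes V: "open V" and U: "open U" and gV: "\<And>z. z \<in> V \<Longrightarrow> g z \<in> U"
    and g_deriv: "\<And>z. z \<in> V \<Longrightarrow> (g has_derivative inv (frechet_derivative \<Psi> (at (g z)))) (at z)"
    and \<Psi>_diff: "\<And>w. w \<in> U \<Longrightarrow> \<Psi> differentiable at w"
    and \<Psi>_bij: "\<And>w. w \<in> U \<Longrightarrow> bij (frechet_derivative \<Psi> (at w))"
    and jacobian: "\<And>k l. smooth_on U (\<lambda>w. pd \<Psi> w l $ k)"
    and B: "smooth_on U B"
  shows "smooth_on V (\<lambda>z. B (g z))"
proof -
  define J where "J w = matrix (frechet_derivative \<Psi> (at w))" for w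
  have smooth_J: "smooth_on U (\<lambda>w. J w $ k $ l)" for k l
    using jacobian by (simp add: J_def matrix_def pd_def)
  have det_J: "det (J w) \<noteq> 0" if "w \<in> U" for w
    unfolding J_def using det_nz_iff_inj[OF linear_frechet_derivative[OF \<Psi>_diff[OF that]]]
      \<Psi>_bij[OF that] bij_is_inj by blast
  \<comment> \<open>By Cramer's rule the inverse Jacobian has smooth entries, so the chain rule writes
    \<open>pd (B \<circ> g)\<close> again as a smooth function composed with \<open>g\<close>.\<close>
  have cramer_inv: "inv (frechet_derivative \<Psi> (at w)) b $ k
      = det (\<chi> i l. if l = k then b $ i else J w $ i $ l) / det (J w)" if w: "w \<in> U" for w b k
  proof -
    let ?D = "frechet_derivative \<Psi> (at w)"
    have "J w *v inv ?D b = ?D (inv ?D b)"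
      unfolding J_def by (metis matrix_vector_mul(2) linear_frechet_derivative[OF \<Psi>_diff[OF w]])
    also have "\<dots> = b"
      using \<Psi>_bij[OF w] by (simp add: bij_is_surj surj_f_inv_f)
    finally have "J w *v inv ?D b = b" .
    from cramer_lemma[of k "J w" "inv ?D b", unfolded this] show ?thesis
      using det_J[OF w] by (simp add: field_simps)
  qed
  have smooth_cramer: "smooth_on U (\<lambda>w. (\<chi> i l. if l = k then b $ i else J w $ i $ l) $ i $ l)"
    for b :: "real^'n" and k i l
    by (cases "l = k") (simp_all add: smooth_on_const smooth_J)
  have comp_diff: "(\<lambda>z. B (g z)) differentiable at z" if "smooth_on U B" "z \<in> V" for B z
    using differentiable_chain_at[OF differentiableI[OF g_deriv[OF that(2)]]
        smooth_on_imp_differentiable[OF that(1) gV[OF that(2)]]]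
    by (simp add: o_def)
  show ?thesis
  proof (rule smooth_onI_closed[OF V, where P = "\<lambda>h. \<exists>B. smooth_on U B \<and> (\<forall>z\<in>V. h z = B (g z))"])
    fix h :: "real^'n \<Rightarrow> real" and z
    assume "\<exists>B. smooth_on U B \<and> (\<forall>z\<in>V. h z = B (g z))" and z: "z \<in> V"
    then obtain B where B: "smooth_on U B" "\<forall>z\<in>V. h z = B (g z)" by blast
    show "h differentiable at z"
      by (rule differentiable_at_cong_open[OF V z _ comp_diff[OF B(1) z]]) (use B(2) in simp)
  next
    fix h :: "real^'n \<Rightarrow> real" and j
    assume "\<exists>B. smooth_on U B \<and> (\<forall>z\<in>V. h z = B (g z))"
    then obtain B where B: "smooth_on U B" "\<forall>z\<in>V. h z = B (g z)" by blast
    define B' where "B' w = (\<Sum>k\<in>UNIV. det (\<chi> i l. if l = k then axis j 1 $ i else J w $ i $ l)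
        * (1 / det (J w)) * pd B w k)" for w
    have "smooth_on U B'"
      unfolding B'_def
      by (intro smooth_on_sum smooth_on_mult smooth_on_det smooth_on_inverse smooth_on_pd
          U B(1) smooth_cramer smooth_J det_J) simp_all
    moreover have "pd h z j = B' (g z)" if z: "z \<in> V" for z
    proof -
      have "pd h z j = pd (\<lambda>z. B (g z)) z j"
        by (rule pd_cong_open[OF V z]) (use B(2) in simp)
      also have "\<dots> = B' (g z)"
        using pd_compose[OF g_deriv[OF z] smooth_on_imp_differentiable[OF B(1) gV[OF z]]]
        by (simp add: B'_def cramer_inv[OF gV[OF z]])
      finally show ?thesis .
    qed
    ultimately show "\<exists>h'. (\<exists>B. smooth_on U B \<and> (\<forall>z\<in>V. h' z = B (g z))) \<and> (\<forall>z\<in>V. pd h z j = h' z)"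
      by (intro exI[of _ "\<lambda>z. B' (g z)"] conjI exI[of _ B']) auto
  next
    show "\<exists>B'. smooth_on U B' \<and> (\<forall>z\<in>V. B (g z) = B' (g z))"
      using B by blast
  qed
qed

lemma smooth_inverse_function_theorem:
  fixes \<Psi> :: "real^'n \<Rightarrow> real^'n"
  assumes S: "open S" "w0 \<in> S"
    and \<Psi>_diff: "\<And>w. w \<in> S \<Longrightarrow> \<Psi> differentiable at w"
    and jacobian: "\<And>k l. smooth_on S (\<lambda>w. pd \<Psi> w l $ k)"
    and inj0: "inj (frechet_derivative \<Psi> (at w0))"
  obtains U V g where "open U" "U \<subseteq> S" "w0 \<in> U" "open V" "homeomorphism U V \<Psi> g"
    "\<And>B :: real^'n \<Rightarrow> real. smooth_on U B \<Longrightarrow> smooth_on V (\<lambda>z. B (g z))"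
proof -
  have bounded: "bounded_linear (frechet_derivative \<Psi> (at w))" if "w \<in> S" for w
    using linear_frechet_derivative[OF \<Psi>_diff[OF that]] linear_conv_bounded_linear by blast
  define \<Psi>' where "\<Psi>' w = Blinfun (frechet_derivative \<Psi> (at w))" for w
  have \<Psi>'_apply: "blinfun_apply (\<Psi>' w) = frechet_derivative \<Psi> (at w)" if "w \<in> S" for w
    unfolding \<Psi>'_def using bounded_linear_Blinfun_apply[OF bounded[OF that]] .
  have deriv: "(\<Psi> has_derivative blinfun_apply (\<Psi>' w)) (at w)" if "w \<in> S" for w
    using \<Psi>_diff[OF that] frechet_derivative_works \<Psi>'_apply[OF that] by metis
  have "continuous_on S (\<lambda>w. pd \<Psi> w j)" for j
  proof -
    have "continuous_on S (\<lambda>w. \<chi> k. pd \<Psi> w j $ k)"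
      by (intro continuous_on_vec_lambda smooth_on_imp_continuous_on jacobian)
    then show ?thesis by simp
  qed
  then have "continuous_on S (\<lambda>w. blinfun_apply (\<Psi>' w) (axis j 1))" for j
    by (rule continuous_on_cong[THEN iffD1, rotated 2]) (simp_all add: \<Psi>'_apply pd_def)
  then have cont: "continuous_on S \<Psi>'"
    unfolding continuous_on_eq_continuous_within
    by (auto intro!: continuous_blinfun_componentwiseI1 simp: Basis_vec_def)
  define inv0 where "inv0 = Blinfun (inv (frechet_derivative \<Psi> (at w0)))"
  have "inv0 o\<^sub>L \<Psi>' w0 = id_blinfun"
    using inj_linear_imp_inv_bounded_linear[OF bounded[OF S(2)] inj0] inj0
    by (intro blinfun_eqI) (simp add: inv0_def \<Psi>'_apply[OF S(2)] bounded_linear_Blinfun_apply)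
  then obtain U V g g' where U: "open U" "U \<subseteq> S" "w0 \<in> U" and V: "open V"
    and hom: "homeomorphism U V \<Psi> g"
    and g_deriv: "\<And>z. z \<in> V \<Longrightarrow> (g has_derivative g' z) (at z)"
    and g'_eq: "\<And>z. z \<in> V \<Longrightarrow> g' z = inv (blinfun_apply (\<Psi>' (g z)))"
    and bij: "\<And>z. z \<in> V \<Longrightarrow> bij (blinfun_apply (\<Psi>' (g z)))"
    using inverse_function_theorem[OF S(1) deriv cont S(2)] by metis
  have gV: "g z \<in> U" if "z \<in> V" for z
    using hom that unfolding homeomorphism_def by blast
  have bij_U: "bij (frechet_derivative \<Psi> (at w))" if "w \<in> U" for w
  proof -
    have "\<Psi> w \<in> V" "g (\<Psi> w) = w"
      using hom that unfolding homeomorphism_def by blast+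
    then show ?thesis
      using bij[of "\<Psi> w"] \<Psi>'_apply U(2) that by auto
  qed
  have g_deriv': "(g has_derivative inv (frechet_derivative \<Psi> (at (g z)))) (at z)" if "z \<in> V" for z
    using g_deriv[OF that] g'_eq[OF that] \<Psi>'_apply gV[OF that] U(2) by auto
  have \<Psi>_diff_U: "\<Psi> differentiable at w" if "w \<in> U" for w
    using \<Psi>_diff U(2) that by blast
  have jacobian_U: "smooth_on U (\<lambda>w. pd \<Psi> w l $ k)" for k l
    using smooth_on_subset[OF jacobian U(2)] .
  show ?thesis
  proof (rule that[OF U V hom])
    fix B :: "real^'n \<Rightarrow> real" assume B: "smooth_on U B"
    show "smooth_on V (\<lambda>z. B (g z))"
      by (rule smooth_on_compose_local_inverse[where \<Psi> = \<Psi> and U = U])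
        (simp_all add: V U(1) gV g_deriv' \<Psi>_diff_U bij_U jacobian_U B)
  qed
qed

section \<open>The Euler identity of a logarithmically homogeneous potential\<close>

lemma pd_scaling:
  fixes K :: "real^'n \<Rightarrow> real"
  assumes W: "open W" "z \<in> W"
    and K_diff: "K differentiable at (t *\<^sub>R z)" "K differentiable at z"
    and K_scale: "\<And>u. u \<in> W \<Longrightarrow> K (t *\<^sub>R u) = c * K u + d"
  shows "t * pd K (t *\<^sub>R z) a = c * pd K z a"
proof -
  let ?D1 = "frechet_derivative K (at (t *\<^sub>R z))" and ?D2 = "frechet_derivative K (at z)"
  have "((\<lambda>u. t *\<^sub>R u) has_derivative (\<lambda>v. t *\<^sub>R v)) (at z)"
    by (auto intro!: derivative_eq_intros)
  from has_derivative_compose[OF this K_diff(1)[unfolded frechet_derivative_works]]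
  have "((\<lambda>u. K (t *\<^sub>R u)) has_derivative (\<lambda>v. ?D1 (t *\<^sub>R v))) (at z)"
    by (simp add: o_def)
  moreover have "((\<lambda>u. K (t *\<^sub>R u)) has_derivative (\<lambda>v. c * ?D2 v)) (at z)"
  proof (rule has_derivative_transform_within_open[OF _ W])
    show "((\<lambda>u. c * K u + d) has_derivative (\<lambda>v. c * ?D2 v)) (at z)"
      using K_diff(2)[unfolded frechet_derivative_works] by (auto intro!: derivative_eq_intros)
  qed (simp add: K_scale)
  ultimately have "?D1 (t *\<^sub>R axis a 1) = c * ?D2 (axis a 1)"
    by (metis has_derivative_unique)
  then show ?thesis
    using linear_frechet_derivative[OF K_diff(1)] by (simp add: pd_def linear_scale)
qed

lemma euler_identity_of_log_homogeneous:
  fixes G :: "real^'n \<Rightarrow> real"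
  assumes G: "smooth_on V G" and W: "open W" "y \<in> W" "W \<subseteq> V" and "0 < \<delta>"
    and hom: "\<And>z t. z \<in> W \<Longrightarrow> \<bar>t - 1\<bar> < \<delta> \<Longrightarrow> t *\<^sub>R z \<in> V \<and> G (t *\<^sub>R z) = G z + ln t"
  shows "(\<Sum>d\<in>UNIV. F3 G y a b d * y $ d) = -2 * F2 G y a b"
proof -
  define \<epsilon> where "\<epsilon> = min \<delta> 1"
  have \<epsilon>: "0 < \<epsilon>" and t_pos: "\<bar>t - 1\<bar> < \<epsilon> \<Longrightarrow> 0 < t" for t
    using \<open>0 < \<delta>\<close> by (auto simp: \<epsilon>_def)
  define H1 where "H1 x = pd G x a" for x
  define H2 where "H2 x = pd H1 x b" for x
  have H1_diff: "H1 differentiable at x" if "x \<in> V" for x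
    unfolding H1_def[abs_def] by (rule smooth_on_imp_differentiable[OF smooth_on_pd[OF G] that])
  have H2_diff: "H2 differentiable at x" if "x \<in> V" for x
    unfolding H2_def[abs_def] H1_def[abs_def]
    by (rule smooth_on_imp_differentiable[OF smooth_on_pd[OF smooth_on_pd[OF G]] that])
  have H1_scale: "H1 (t *\<^sub>R z) = H1 z / t" if z: "z \<in> W" and t: "\<bar>t - 1\<bar> < \<epsilon>" for z t
  proof -
    have "t * pd G (t *\<^sub>R z) a = 1 * pd G z a"
      by (rule pd_scaling[OF W(1) z]) (use z t hom W(3) smooth_on_imp_differentiable[OF G] \<epsilon>_def in auto)
    then show ?thesis
      using t_pos[OF t] by (simp add: H1_def field_simps)
  qed
  have H2_scale: "H2 (t *\<^sub>R y) = H2 y / t\<^sup>2" if t: "\<bar>t - 1\<bar> < \<epsilon>" for t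
  proof -
    have "t * pd H1 (t *\<^sub>R y) b = (1 / t) * pd H1 y b"
      by (rule pd_scaling[OF W(1,2), where d = 0])
        (use t hom W H1_diff H1_scale \<epsilon>_def in auto)
    then show ?thesis
      using t_pos[OF t] by (simp add: H2_def field_simps power2_eq_square)
  qed
  let ?D = "frechet_derivative H2 (at y)"
  have "((\<lambda>t. t *\<^sub>R y) has_derivative (\<lambda>s. s *\<^sub>R y)) (at (1::real))"
    by (auto intro!: derivative_eq_intros)
  from has_derivative_compose[OF this, of H2 ?D]
  have "((\<lambda>t. H2 (t *\<^sub>R y)) has_derivative (\<lambda>s. ?D (s *\<^sub>R y))) (at 1)"
    using H2_diff[of y] W frechet_derivative_works by (auto simp: o_def)
  moreover have "((\<lambda>t. H2 (t *\<^sub>R y)) has_derivative (\<lambda>s. s * (-2 * H2 y))) (at (1::real))"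
  proof (rule has_derivative_transform_within_open[of "\<lambda>t. H2 y / t\<^sup>2" _ _ _ "ball 1 \<epsilon>"])
    show "((\<lambda>t. H2 y / t\<^sup>2) has_derivative (\<lambda>s. s * (-2 * H2 y))) (at (1::real))"
      by (auto intro!: derivative_eq_intros simp: power2_eq_square)
  qed (use \<epsilon> H2_scale in \<open>auto simp: dist_real_def abs_minus_commute\<close>)
  ultimately have "?D y = -2 * H2 y"
    using has_derivative_unique by (metis scale_one mult_1)
  moreover have "?D y = (\<Sum>d\<in>UNIV. y $ d * pd H2 y d)"
    using frechet_derivative_eq_sum_pd[OF H2_diff] W by auto
  moreover have "F3 G y a b d = pd H2 y d" "F2 G y a b = H2 y" for d
    by (simp_all add: F3_def F2_def H1_def[abs_def] H2_def[abs_def])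
  ultimately show ?thesis
    by (simp add: mult.commute)
qed

section \<open>Formal reality of the Jordan product\<close>

definition hessian :: "(real^'n \<Rightarrow> real) \<Rightarrow> real^'n \<Rightarrow> real^'n^'n" where
  "hessian G x = (\<chi> p q. F2 G x p q)"

lemma gamma_form_eq_inner_hessian: "gamma_form G x u v = u \<bullet> (hessian G x *v v)"
  by (simp add: gamma_form_def hessian_def inner_vec_def matrix_vector_mult_def
      sum_distrib_left mult_ac)

lemma invertible_hessian_if_negative_definite:
  assumes "negative_definite (gamma_form G x)"
  shows "invertible (hessian G x)"
proof -
  have "hessian G x *v u = 0 \<Longrightarrow> u = 0" for u
    using assms unfolding negative_definite_def gamma_form_eq_inner_hessian by force
  then show ?thesis
    using matrix_left_invertible_ker invertible_left_inverse by blast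
qed

lemma matrix_inv_right:
  fixes A :: "'a::semiring_1^'n^'n"
  assumes "invertible A"
  shows "A ** matrix_inv A = mat 1"
  using someI_ex[OF assms[unfolded invertible_def]] by (simp add: matrix_inv_def)

lemma sum_swap3:
  "(\<Sum>d\<in>A. \<Sum>a\<in>B. \<Sum>b\<in>C. f a b d) = (\<Sum>a\<in>B. \<Sum>b\<in>C. \<Sum>d\<in>A. f a b d)"
proof -
  have "(\<Sum>d\<in>A. \<Sum>a\<in>B. \<Sum>b\<in>C. f a b d) = (\<Sum>a\<in>B. \<Sum>d\<in>A. \<Sum>b\<in>C. f a b d)"
    by (rule sum.swap)
  also have "\<dots> = (\<Sum>a\<in>B. \<Sum>b\<in>C. \<Sum>d\<in>A. f a b d)"
    by (rule sum.cong[OF refl], rule sum.swap)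
  finally show ?thesis .
qed

lemma jprod_eq_hessian_inverse:
  "jprod G x u u = (- (1/2)) *\<^sub>R (matrix_inv (hessian G x) *v
     (\<chi> d. \<Sum>a\<in>UNIV. \<Sum>b\<in>UNIV. F3 G x a b d * u $ a * u $ b))"
proof -
  have "(matrix_inv (hessian G x) *v (\<chi> d. \<Sum>a\<in>UNIV. \<Sum>b\<in>UNIV. F3 G x a b d * u $ a * u $ b)) $ c
      = (\<Sum>d\<in>UNIV. \<Sum>a\<in>UNIV. \<Sum>b\<in>UNIV. matrix_inv (hessian G x) $ c $ d * (F3 G x a b d * u $ a * u $ b))"
    for c by (simp add: matrix_vector_mult_def sum_distrib_left)
  also have "\<dots> c = (\<Sum>a\<in>UNIV. \<Sum>b\<in>UNIV. \<Sum>d\<in>UNIV. matrix_inv (hessian G x) $ c $ d * (F3 G x a b d * u $ a * u $ b))"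
    for c by (rule sum_swap3)
  finally show ?thesis
    by (simp add: vec_eq_iff jprod_def hessian_def[symmetric] mult_ac)
qed

lemma gamma_form_jprod:
  assumes euler: "\<And>a b. (\<Sum>d\<in>UNIV. F3 G y a b d * y $ d) = -2 * F2 G y a b"
    and inv: "invertible (hessian G y)"
  shows "gamma_form G y y (jprod G y u u) = gamma_form G y u u"
proof -
  define T where "T = (\<chi> d. \<Sum>a\<in>UNIV. \<Sum>b\<in>UNIV. F3 G y a b d * u $ a * u $ b)"
  have "jprod G y u u = (- (1/2)) *\<^sub>R (matrix_inv (hessian G y) *v T)"
    unfolding T_def by (rule jprod_eq_hessian_inverse)
  then have "hessian G y *v jprod G y u u = (- (1/2)) *\<^sub>R T"
    by (simp only: matrix_vector_mult_scaleR matrix_vector_mul_assoc matrix_inv_right[OF inv]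
        matrix_vector_mul_lid)
  then have "gamma_form G y y (jprod G y u u) = - (1/2) * (y \<bullet> T)"
    by (simp add: gamma_form_eq_inner_hessian)
  also have "y \<bullet> T = (\<Sum>d\<in>UNIV. \<Sum>a\<in>UNIV. \<Sum>b\<in>UNIV. y $ d * (F3 G y a b d * u $ a * u $ b))"
    by (simp add: T_def inner_vec_def sum_distrib_left)
  also have "\<dots> = (\<Sum>a\<in>UNIV. \<Sum>b\<in>UNIV. \<Sum>d\<in>UNIV. y $ d * (F3 G y a b d * u $ a * u $ b))"
    by (rule sum_swap3)
  also have "\<dots> = (\<Sum>a\<in>UNIV. \<Sum>b\<in>UNIV. u $ a * u $ b * (\<Sum>d\<in>UNIV. F3 G y a b d * y $ d))"
    by (simp add: sum_distrib_left mult_ac)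
  also have "\<dots> = -2 * gamma_form G y u u"
    unfolding euler by (simp add: gamma_form_def sum_distrib_left mult_ac)
  finally show ?thesis by simp
qed

lemma linear_sum_list_map:
  "linear \<phi> \<Longrightarrow> \<phi> (sum_list (map f xs)) = sum_list (map (\<lambda>x. \<phi> (f x)) xs)"
  by (induction xs) (simp_all add: linear_add linear_0)

lemma formally_real_if_negative_on_squares:
  fixes p :: "'a::real_vector \<Rightarrow> 'a \<Rightarrow> 'a" and \<phi> :: "'a \<Rightarrow> real"
  assumes \<phi>: "linear \<phi>" and "p 0 0 = 0" and neg: "\<And>u. u \<noteq> 0 \<Longrightarrow> \<phi> (p u u) < 0"
  shows "formally_real p"
  unfolding formally_real_def
proof (intro allI impI ballI)
  fix xs x assume sum0: "sum_list (map (\<lambda>x. p x x) xs) = 0" and x: "x \<in> set xs"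
  have nonneg: "0 \<le> - \<phi> (p u u)" for u
    using neg[of u] \<open>p 0 0 = 0\<close> linear_0[OF \<phi>] by (cases "u = 0") auto
  have "sum_list (map (\<lambda>x. - \<phi> (p x x)) xs) = 0"
    using linear_sum_list_map[OF \<phi>, of "\<lambda>x. p x x" xs] sum0 linear_0[OF \<phi>]
      uminus_sum_list_map[of "\<lambda>x. \<phi> (p x x)" xs]
    by (simp add: o_def)
  moreover have "\<forall>v\<in>set (map (\<lambda>x. - \<phi> (p x x)) xs). 0 \<le> v"
    using nonneg by auto
  ultimately have "\<forall>v\<in>set (map (\<lambda>x. - \<phi> (p x x)) xs). v = 0"
    using sum_list_nonneg_eq_0_iff by blast
  then show "x = 0"
    using x neg by force
qed

lemma formally_real_jprod_if_euler_identity: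
  assumes euler: "\<And>a b. (\<Sum>d\<in>UNIV. F3 G y a b d * y $ d) = -2 * F2 G y a b"
    and negdef: "negative_definite (gamma_form G y)"
  shows "formally_real (jprod G y)"
proof (rule formally_real_if_negative_on_squares)
  show "linear (gamma_form G y y)"
    unfolding gamma_form_eq_inner_hessian[abs_def]
    by (intro linearI) (simp_all add: matrix_vector_right_distrib inner_add_right algebra_simps)
  show "jprod G y 0 0 = 0"
    by (simp add: jprod_def vec_eq_iff)
  show "gamma_form G y y (jprod G y u u) < 0" if "u \<noteq> 0" for u
    using gamma_form_jprod[OF euler invertible_hessian_if_negative_definite[OF negdef]]
      negdef that unfolding negative_definite_def by simp
qed

section \<open>The cone over a centro-affine immersion\<close>

lemma obtain_bij_option:
  assumes "CARD('n) = CARD('m) + 1"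
  obtains \<sigma> :: "'m::finite option \<Rightarrow> 'n::finite" where "bij \<sigma>"
proof -
  have "card (UNIV :: 'm option set) = card (UNIV :: 'n set)"
    using assms by simp
  then show ?thesis
    using finite_same_card_bij[of "UNIV :: 'm option set" "UNIV :: 'n set"] that by auto
qed

text \<open>
  A bijection \<open>\<sigma> :: 'm option \<Rightarrow> 'n\<close> identifies \<open>real^'n\<close> with \<open>\<real>\<^sup>m \<times> \<real>\<close>: the coordinates
  \<open>\<sigma> (Some i)\<close> form the chart point \<open>\<xi>\<close> and \<open>\<sigma> None\<close> is the radial parameter \<open>\<lambda>\<close>, so that
  \<open>cone_param f \<sigma>\<close> is the cone map \<open>(\<xi>, \<lambda>) \<mapsto> \<lambda> f(\<xi>)\<close>.
\<close>

definition chart_part :: "('m option \<Rightarrow> 'n) \<Rightarrow> real^'n \<Rightarrow> real^'m" where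
  "chart_part \<sigma> w = (\<chi> i. w $ \<sigma> (Some i))"

definition cone_param :: "(real^'m \<Rightarrow> real^'n) \<Rightarrow> ('m option \<Rightarrow> 'n) \<Rightarrow> real^'n \<Rightarrow> real^'n" where
  "cone_param f \<sigma> w = (w $ \<sigma> None) *\<^sub>R f (chart_part \<sigma> w)"

lemma linear_chart_part: "linear (chart_part \<sigma>)"
  by (rule linearI) (simp_all add: chart_part_def vec_eq_iff)

lemma has_derivative_cone_param:
  assumes "f differentiable at (chart_part \<sigma> w)"
  shows "(cone_param f \<sigma> has_derivative (\<lambda>v. (v $ \<sigma> None) *\<^sub>R f (chart_part \<sigma> w)
      + (w $ \<sigma> None) *\<^sub>R frechet_derivative f (at (chart_part \<sigma> w)) (chart_part \<sigma> v))) (at w)"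
proof -
  have chart: "(chart_part \<sigma> has_derivative chart_part \<sigma>) (at w)"
    using linear_chart_part linear_conv_bounded_linear bounded_linear_imp_has_derivative by blast
  have "((\<lambda>w. f (chart_part \<sigma> w)) has_derivative
      (\<lambda>v. frechet_derivative f (at (chart_part \<sigma> w)) (chart_part \<sigma> v))) (at w)"
    using has_derivative_compose[OF chart assms[unfolded frechet_derivative_works]] by simp
  from has_derivative_scaleR[OF bounded_linear_imp_has_derivative[OF bounded_linear_vec_nth] this]
  show ?thesis
    unfolding cone_param_def by (simp add: algebra_simps)
qed

lemma smooth_on_jacobian_cone_param:
  assumes U: "open U" and f: "smooth_on U f"
  shows "smooth_on (chart_part \<sigma> -` U) (\<lambda>w. pd (cone_param f \<sigma>) w l $ k)"
proof -
  let ?S = "chart_part \<sigma> -` U"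
  have S: "open ?S"
    using continuous_open_vimage[OF U] linear_continuous_at linear_chart_part
      linear_conv_bounded_linear by blast
  have f_chart: "smooth_on ?S (\<lambda>w. f (chart_part \<sigma> w) $ k)"
    and pd_f_chart: "smooth_on ?S (\<lambda>w. pd f (chart_part \<sigma> w) i $ k)" for i
    using smooth_on_compose_linear[OF linear_chart_part U smooth_on_component[OF U f]]
      smooth_on_compose_linear[OF linear_chart_part U smooth_on_component[OF U smooth_on_pd[OF f]]]
    by blast+
  have "smooth_on ?S (\<lambda>w. axis l 1 $ \<sigma> None * f (chart_part \<sigma> w) $ k + w $ \<sigma> None *
      (\<Sum>i\<in>UNIV. chart_part \<sigma> (axis l 1) $ i * pd f (chart_part \<sigma> w) i $ k))"
    by (intro smooth_on_add smooth_on_mult smooth_on_sum S smooth_on_const smooth_on_coord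
        f_chart pd_f_chart) simp
  then show ?thesis
  proof (rule smooth_on_cong[OF S])
    fix w assume "w \<in> ?S"
    then have "f differentiable at (chart_part \<sigma> w)"
      using smooth_on_imp_differentiable[OF f] by simp
    from pd_eq_derivative[OF has_derivative_cone_param[OF this]] frechet_derivative_eq_sum_pd[OF this]
    show "axis l 1 $ \<sigma> None * f (chart_part \<sigma> w) $ k + w $ \<sigma> None *
        (\<Sum>i\<in>UNIV. chart_part \<sigma> (axis l 1) $ i * pd f (chart_part \<sigma> w) i $ k)
        = pd (cone_param f \<sigma>) w l $ k"
      by (simp add: sum_component)
  qed
qed

lemma inj_derivative_cone_param:
  assumes \<sigma>: "bij \<sigma>" and f: "f differentiable at (chart_part \<sigma> w)"
    and inj: "inj (frechet_derivative f (at (chart_part \<sigma> w)))"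
    and transversal: "f (chart_part \<sigma> w) \<notin> range (frechet_derivative f (at (chart_part \<sigma> w)))"
    and radial: "w $ \<sigma> None \<noteq> 0"
  shows "inj (frechet_derivative (cone_param f \<sigma>) (at w))"
proof -
  let ?Df = "frechet_derivative f (at (chart_part \<sigma> w))"
  define D where "D v = (v $ \<sigma> None) *\<^sub>R f (chart_part \<sigma> w) + (w $ \<sigma> None) *\<^sub>R ?Df (chart_part \<sigma> v)"
    for v
  have deriv: "(cone_param f \<sigma> has_derivative D) (at w)"
    unfolding D_def by (rule has_derivative_cone_param[OF f])
  have Df: "linear ?Df"
    by (rule linear_frechet_derivative[OF f])
  have "v = 0" if Dv: "D v = 0" for v
  proof -
    have radial_v: "v $ \<sigma> None = 0"
    proof (rule ccontr)
      assume nz: "v $ \<sigma> None \<noteq> 0"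
      have "f (chart_part \<sigma> w) = (1 / v $ \<sigma> None) *\<^sub>R ((v $ \<sigma> None) *\<^sub>R f (chart_part \<sigma> w))"
        using nz by simp
      also have "(v $ \<sigma> None) *\<^sub>R f (chart_part \<sigma> w) = - ((w $ \<sigma> None) *\<^sub>R ?Df (chart_part \<sigma> v))"
        using Dv by (simp add: D_def eq_neg_iff_add_eq_0)
      also have "(1 / v $ \<sigma> None) *\<^sub>R - ((w $ \<sigma> None) *\<^sub>R ?Df (chart_part \<sigma> v))
          = ?Df ((- (w $ \<sigma> None / v $ \<sigma> None)) *\<^sub>R chart_part \<sigma> v)"
        by (simp add: linear_scale[OF Df] linear_neg[OF Df])
      finally show False
        using transversal by blast
    qed
    then have "?Df (chart_part \<sigma> v) = 0"
      using Dv radial by (simp add: D_def)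
    then have chart_v: "chart_part \<sigma> v = 0"
      using inj Df linear_injective_0 by blast
    show "v = 0"
      unfolding vec_eq_iff
    proof
      fix j
      obtain a where "j = \<sigma> a"
        using \<sigma> by (metis bij_pointE)
      then show "v $ j = 0 $ j"
        using radial_v chart_v by (cases a) (auto simp: chart_part_def vec_eq_iff)
    qed
  qed
  moreover have "linear D"
    using has_derivative_linear[OF deriv] .
  ultimately show ?thesis
    using frechet_derivative_at[OF deriv] linear_injective_0 by metis
qed

definition scale_radial :: "('m option \<Rightarrow> 'n) \<Rightarrow> real \<Rightarrow> real^'n \<Rightarrow> real^'n" where
  "scale_radial \<sigma> t w = (\<chi> j. if j = \<sigma> None then t * w $ j else w $ j)"

lemma cone_param_scale_radial:
  assumes "inj \<sigma>"
  shows "cone_param f \<sigma> (scale_radial \<sigma> t w) = t *\<^sub>R cone_param f \<sigma> w"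
proof -
  have "\<sigma> (Some i) \<noteq> \<sigma> None" for i
    using assms by (simp add: inj_eq)
  then have "chart_part \<sigma> (scale_radial \<sigma> t w) = chart_part \<sigma> w"
    by (simp add: chart_part_def scale_radial_def)
  then show ?thesis
    by (simp add: cone_param_def scale_radial_def)
qed

lemma log_homogeneous_near_cone_chart:
  fixes f :: "real^'m \<Rightarrow> real^'n" and \<sigma> :: "'m option \<Rightarrow> 'n"
  assumes \<sigma>: "bij \<sigma>" and U': "open U'" and V: "open V"
    and hom: "homeomorphism U' V (cone_param f \<sigma>) g"
    and G: "\<And>w. w \<in> U' \<Longrightarrow> G (cone_param f \<sigma> w) = ln (w $ \<sigma> None)"
    and pos: "\<And>w. w \<in> U' \<Longrightarrow> 0 < w $ \<sigma> None"
    and y: "y \<in> V"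
  obtains W \<delta> where "open W" "y \<in> W" "W \<subseteq> V" "0 < \<delta>"
    "\<And>z t. z \<in> W \<Longrightarrow> \<bar>t - 1\<bar> < \<delta> \<Longrightarrow> t *\<^sub>R z \<in> V \<and> G (t *\<^sub>R z) = G z + ln t"
proof -
  have g_V: "g z \<in> U'" and \<Psi>_g: "cone_param f \<sigma> (g z) = z" if "z \<in> V" for z
    using hom that unfolding homeomorphism_def by blast+
  have \<Psi>_U': "cone_param f \<sigma> w \<in> V" if "w \<in> U'" for w
    using hom that unfolding homeomorphism_def by blast
  define \<Phi> where "\<Phi> p = scale_radial \<sigma> (snd p) (g (fst p))" for p :: "(real^'n) \<times> real"
  have cont_g: "continuous_on (V \<times> UNIV) (\<lambda>p. g (fst p))"
    by (rule continuous_on_compose2[OF homeomorphism_cont2[OF hom] continuous_on_fst[OF continuous_on_id]])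
      auto
  have "continuous_on (V \<times> UNIV)
      (\<lambda>p. if j = \<sigma> None then snd p * g (fst p) $ j else g (fst p) $ j)" for j
    by (cases "j = \<sigma> None") (auto intro!: continuous_intros cont_g)
  then have "continuous_on (V \<times> UNIV) \<Phi>"
    unfolding \<Phi>_def scale_radial_def by (rule continuous_on_vec_lambda)
  then have "open (\<Phi> -` U' \<inter> V \<times> UNIV)"
    using continuous_on_open_vimage[OF open_Times[OF V open_UNIV]] U' by blast
  moreover have "(y, 1) \<in> \<Phi> -` U' \<inter> V \<times> UNIV"
  proof -
    have "scale_radial \<sigma> 1 (g y) = g y"
      by (simp add: scale_radial_def vec_eq_iff)
    then show ?thesis
      using g_V[OF y] y by (simp add: \<Phi>_def)
  qed
  ultimately obtain A B where A: "open A" "y \<in> A" and B: "open B" "1 \<in> B"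
    and AB: "A \<times> B \<subseteq> \<Phi> -` U' \<inter> V \<times> UNIV"
    by (metis open_prod_elim mem_Sigma_iff)
  obtain \<delta> where \<delta>: "0 < \<delta>" "ball 1 \<delta> \<subseteq> B \<inter> {0<..}"
    using open_contains_ball[THEN iffD1, OF open_Int[OF B(1) open_greaterThan]] B(2) by force
  show ?thesis
  proof (rule that[OF open_Int[OF A(1) V] _ _ \<delta>(1)])
    show "y \<in> A \<inter> V"
      using A(2) y by blast
    fix z t assume z: "z \<in> A \<inter> V" and t: "\<bar>t - 1\<bar> < \<delta>"
    then have t_B: "t \<in> B" and t_pos: "0 < t"
      using \<delta>(2) by (auto simp: dist_real_def abs_minus_commute subset_iff)
    then have w'_U': "scale_radial \<sigma> t (g z) \<in> U'"
      using AB z by (auto simp: \<Phi>_def)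
    have \<Psi>_w': "cone_param f \<sigma> (scale_radial \<sigma> t (g z)) = t *\<^sub>R z"
      using cone_param_scale_radial[OF bij_is_inj[OF \<sigma>]] \<Psi>_g z by simp
    show "t *\<^sub>R z \<in> V \<and> G (t *\<^sub>R z) = G z + ln t"
    proof
      show "t *\<^sub>R z \<in> V"
        using \<Psi>_U'[OF w'_U'] \<Psi>_w' by simp
      have "G (t *\<^sub>R z) = ln (t * g z $ \<sigma> None)"
        using G[OF w'_U'] \<Psi>_w' by (simp add: scale_radial_def)
      also have "\<dots> = G z + ln t"
        using t_pos pos[OF g_V[of z]] G[OF g_V[of z]] \<Psi>_g[of z] z by (simp add: ln_mult)
      finally show "G (t *\<^sub>R z) = G z + ln t" .
    qed
  qed auto
qed

lemma cone_potential_smooth_log_homogeneous: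
  fixes U :: "(real^'m) set" and f :: "real^'m \<Rightarrow> real^'n"
    and N :: "((real^'m) \<times> real) set" and G :: "real^'n \<Rightarrow> real"
  assumes dim: "CARD('n) = CARD('m) + 1"
    and imm: "centroaffine_immersion U f"
    and y: "\<xi>0 \<in> U" "lam0 > 0"
    and N: "open N" "(\<xi>0, lam0) \<in> N" "N \<subseteq> U \<times> {0<..}"
    and G: "\<forall>(\<xi>, t)\<in>N. G (t *\<^sub>R f \<xi>) = ln t"
  obtains V W \<delta> where "smooth_on V G" "open W" "lam0 *\<^sub>R f \<xi>0 \<in> W" "W \<subseteq> V" "0 < \<delta>"
    "\<And>z t. z \<in> W \<Longrightarrow> \<bar>t - 1\<bar> < \<delta> \<Longrightarrow> t *\<^sub>R z \<in> V \<and> G (t *\<^sub>R z) = G z + ln t"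
proof -
  have U: "open U" and f: "smooth_on U f"
    and f_inj: "\<And>\<xi>. \<xi> \<in> U \<Longrightarrow> inj (frechet_derivative f (at \<xi>))"
    and f_transversal: "\<And>\<xi>. \<xi> \<in> U \<Longrightarrow> f \<xi> \<notin> range (frechet_derivative f (at \<xi>))"
    using imm unfolding centroaffine_immersion_def by auto
  obtain \<sigma> :: "'m option \<Rightarrow> 'n" where \<sigma>: "bij \<sigma>"
    using obtain_bij_option[OF dim] by blast
  define c where "c = \<sigma> None"
  define S where "S = {w. (chart_part \<sigma> w, w $ c) \<in> N}"
  have "isCont (\<lambda>w. (chart_part \<sigma> w, w $ c)) w" for w
    using linear_chart_part linear_conv_bounded_linear
    by (intro continuous_Pair linear_continuous_at bounded_linear_vec_nth) blast
  then have S: "open S"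
    unfolding S_def using continuous_open_vimage[OF N(1), of "\<lambda>w. (chart_part \<sigma> w, w $ c)"]
    by (simp add: vimage_def)
  have S_U: "chart_part \<sigma> w \<in> U" and S_pos: "0 < w $ c" if "w \<in> S" for w
    using that N(3) unfolding S_def by auto
  have G_cone: "G (cone_param f \<sigma> w) = ln (w $ c)" if "w \<in> S" for w
    using that G unfolding S_def cone_param_def c_def by auto
  define w0 :: "real^'n" where "w0 = (\<chi> j. case inv \<sigma> j of None \<Rightarrow> lam0 | Some i \<Rightarrow> \<xi>0 $ i)"
  have w0: "chart_part \<sigma> w0 = \<xi>0" "w0 $ c = lam0"
    using bij_is_inj[OF \<sigma>] by (simp_all add: w0_def chart_part_def c_def vec_eq_iff)
  have w0_S: "w0 \<in> S"
    using N(2) by (simp add: S_def w0)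
  have y_eq: "cone_param f \<sigma> w0 = lam0 *\<^sub>R f \<xi>0"
    by (simp add: cone_param_def w0 flip: c_def)
  have \<Psi>_diff: "cone_param f \<sigma> differentiable at w" if "w \<in> S" for w
    by (rule differentiableI[OF has_derivative_cone_param[OF smooth_on_imp_differentiable[OF f S_U[OF that]]]])
  have jacobian: "smooth_on S (\<lambda>w. pd (cone_param f \<sigma>) w l $ k)" for k l
    using smooth_on_subset[OF smooth_on_jacobian_cone_param[OF U f]] S_U by blast
  have inj0: "inj (frechet_derivative (cone_param f \<sigma>) (at w0))"
    using inj_derivative_cone_param[OF \<sigma>] smooth_on_imp_differentiable[OF f] f_inj f_transversal
      w0 y by (simp add: flip: c_def)
  obtain U' V g where U': "open U'" "U' \<subseteq> S" "w0 \<in> U'" and V: "open V"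
    and hom: "homeomorphism U' V (cone_param f \<sigma>) g"
    and smooth_g: "\<And>B :: real^'n \<Rightarrow> real. smooth_on U' B \<Longrightarrow> smooth_on V (\<lambda>z. B (g z))"
    using smooth_inverse_function_theorem[OF S w0_S \<Psi>_diff jacobian inj0] by blast
  have g_V: "g z \<in> U'" and \<Psi>_g: "cone_param f \<sigma> (g z) = z" if "z \<in> V" for z
    using hom that unfolding homeomorphism_def by blast+
  have G_g: "G z = ln (g z $ c)" if "z \<in> V" for z
    using G_cone[of "g z"] \<Psi>_g[OF that] g_V[OF that] U'(2) by auto
  have "smooth_on V (\<lambda>z. ln (g z $ c))"
    using smooth_g[OF smooth_on_ln_coord[OF U'(1)]] S_pos U'(2) by blast
  then have smooth_G: "smooth_on V G"
    by (rule smooth_on_cong[OF V]) (simp add: G_g)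
  have G_U': "G (cone_param f \<sigma> w) = ln (w $ \<sigma> None)" and pos_U': "0 < w $ \<sigma> None"
    if "w \<in> U'" for w
    using G_cone S_pos U'(2) that unfolding c_def by auto
  have "cone_param f \<sigma> w0 \<in> V"
    using hom U'(3) unfolding homeomorphism_def by blast
  then have y_V: "lam0 *\<^sub>R f \<xi>0 \<in> V"
    unfolding y_eq .
  obtain W \<delta> where "open W" "lam0 *\<^sub>R f \<xi>0 \<in> W" "W \<subseteq> V" "0 < \<delta>"
    "\<And>z t. z \<in> W \<Longrightarrow> \<bar>t - 1\<bar> < \<delta> \<Longrightarrow> t *\<^sub>R z \<in> V \<and> G (t *\<^sub>R z) = G z + ln t"
    using log_homogeneous_near_cone_chart[OF \<sigma> U'(1) V hom G_U' pos_U' y_V] by blast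
  then show ?thesis
    by (rule that[OF smooth_G])
qed

theorem lemma4p4:
  fixes U :: "(real^'m) set"
    and f :: "real^'m \<Rightarrow> real^'n"
    and Gam :: "real^'m \<Rightarrow> 'm \<Rightarrow> 'm \<Rightarrow> 'm \<Rightarrow> real"
    and h :: "real^'m \<Rightarrow> 'm \<Rightarrow> 'm \<Rightarrow> real"
    and \<xi>0 :: "real^'m" and lam0 :: real
    and N :: "((real^'m) \<times> real) set"
    and G :: "real^'n \<Rightarrow> real"
  assumes dim: "CARD('n) = CARD('m) + 1"
    and conn: "connected U"
    and imm: "centroaffine_immersion U f"
    and str: "structure_eq U f Gam h"
    and nondeg: "nondegenerate_metric U h"
    and par: "parallel_cubic_form U Gam h"
    and y: "\<xi>0 \<in> U" "lam0 > 0"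
    and N: "open N" "(\<xi>0, lam0) \<in> N" "N \<subseteq> U \<times> {0<..}"
    and G: "\<forall>(\<xi>, t)\<in>N. G (t *\<^sub>R f \<xi>) = ln t"
    and negdef: "negative_definite (gamma_form G (lam0 *\<^sub>R f \<xi>0))"
  shows "formally_real (jprod G (lam0 *\<^sub>R f \<xi>0))"
proof -
  obtain V W \<delta> where "smooth_on V G" "open W" "lam0 *\<^sub>R f \<xi>0 \<in> W" "W \<subseteq> V" "0 < \<delta>"
    "\<And>z t. z \<in> W \<Longrightarrow> \<bar>t - 1\<bar> < \<delta> \<Longrightarrow> t *\<^sub>R z \<in> V \<and> G (t *\<^sub>R z) = G z + ln t"
    using cone_potential_smooth_log_homogeneous[OF dim imm y N G] by blast
  then have "(\<Sum>d\<in>UNIV. F3 G (lam0 *\<^sub>R f \<xi>0) a b d * (lam0 *\<^sub>R f \<xi>0) $ d)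
      = -2 * F2 G (lam0 *\<^sub>R f \<xi>0) a b" for a b
    by (rule euler_identity_of_log_homogeneous)
  then show ?thesis
    using formally_real_jprod_if_euler_identity negdef by blast
qed

end
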